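(* Let $n, r$ be nonnegative integers with $n\geqslant\lceil r/2\rceil+2$. Then $m(L(K_n),r)\leqslant\lfloor (r+2)^2/8\rfloor$.
   Context: All graphs are finite, simple and undirected. For a nonnegative integer $r$ and a graph $G$, the $r$-neighbor bootstrap percolation process on $G$ starts with a set $A_0\subseteq V(G)$ of initially active vertices, and for $i\geqslant 1$, $A_i=A_{i-1}\cup\{v\in V(G) : |N(v)\cap A_{i-1}|\geqslant r\}$, where $N(v)$ is the set of neighbors of $v$. The set $A_0$ is a percolating set if $\bigcup_{i\geqslant 0}A_i=V(G)$; $m(G,r)$ is the minimum size of a percolating set. $L(G)$ is the line graph of $G$ (vertex set $E(G)$, two vertices adjacent iff the edges share an endpoint), and $K_n$ is the complete graph on $n$ vertices. *)

theory Defs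
  imports Main
begin

text \<open>A finite simple graph is given by a vertex set V and a symmetric irreflexive
adjacency relation E (only its restriction to V matters).\<close>

definition nbrs :: "'a set \<Rightarrow> ('a \<Rightarrow> 'a \<Rightarrow> bool) \<Rightarrow> 'a \<Rightarrow> 'a set" where
  "nbrs V E v = {u \<in> V. E v u}"

fun boot :: "'a set \<Rightarrow> ('a \<Rightarrow> 'a \<Rightarrow> bool) \<Rightarrow> nat \<Rightarrow> 'a set \<Rightarrow> nat \<Rightarrow> 'a set" where
  "boot V E r A 0 = A"
| "boot V E r A (Suc i) =
     boot V E r A i \<union> {v \<in> V. card (nbrs V E v \<inter> boot V E r A i) \<ge> r}"

definition percolating :: "'a set \<Rightarrow> ('a \<Rightarrow> 'a \<Rightarrow> bool) \<Rightarrow> nat \<Rightarrow> 'a set \<Rightarrow> bool" where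
  "percolating V E r A \<longleftrightarrow> A \<subseteq> V \<and> (\<Union>i. boot V E r A i) = V"

definition m_perc :: "'a set \<Rightarrow> ('a \<Rightarrow> 'a \<Rightarrow> bool) \<Rightarrow> nat \<Rightarrow> nat" where
  "m_perc V E r = (LEAST k. \<exists>A. percolating V E r A \<and> card A = k)"

definition line_V :: "'a set \<Rightarrow> ('a \<Rightarrow> 'a \<Rightarrow> bool) \<Rightarrow> 'a set set" where
  "line_V V E = {{u, v} | u v. u \<in> V \<and> v \<in> V \<and> u \<noteq> v \<and> E u v}"

definition line_E :: "'a set \<Rightarrow> 'a set \<Rightarrow> bool" where
  "line_E e f \<longleftrightarrow> e \<noteq> f \<and> e \<inter> f \<noteq> {}"

definition K_V :: "nat \<Rightarrow> nat set" where "K_V n = {0..<n}"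
definition K_E :: "nat \<Rightarrow> nat \<Rightarrow> bool" where "K_E u v \<longleftrightarrow> u \<noteq> v"

end

theory Submission
  imports Defs
begin

text \<open>
  A set of edges percolates as soon as the full edge set of the clique is the only r-closed set
  (closed under infecting edges with at least r infected neighbours) containing it. We build such
  sets on vertices a, ..., a + L - 1 by induction on r in steps of 4. Given a set H' for r - 4 on
  the last L - 2 vertices, add the edge a (a+1) if r is odd, edges from a to a + j for even j in
  [2, r] and from a + 1 to a + j for odd j in [3, r] (and j = 2 if r is even), each j \<ge> L being
  replaced by 2L - 1 - j. This adds r edges, matching (r+2)^2/8 - (r-2)^2/8 = r. In a closed set containing
  them, the edges at a and then at a + 1 become infected in the order of their other endpoint,
  helped by the H'-edges at that endpoint, whose number is controlled by an invariant on degrees.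
  Once both hubs are saturated, every other edge has four extra infected neighbours, so the
  restriction to the remaining vertices is (r - 4)-closed and contains H', hence is everything.
\<close>

section \<open>Closed sets of the bootstrap process\<close>

definition boot_closed :: "'a set \<Rightarrow> ('a \<Rightarrow> 'a \<Rightarrow> bool) \<Rightarrow> nat \<Rightarrow> 'a set \<Rightarrow> bool" where
  "boot_closed V E r C \<longleftrightarrow> (\<forall>v\<in>V. r \<le> card (nbrs V E v \<inter> C) \<longrightarrow> v \<in> C)"

definition spans :: "'a set \<Rightarrow> ('a \<Rightarrow> 'a \<Rightarrow> bool) \<Rightarrow> nat \<Rightarrow> 'a set \<Rightarrow> bool" where
  "spans V E r A \<longleftrightarrow> (\<forall>C. A \<subseteq> C \<longrightarrow> C \<subseteq> V \<longrightarrow> boot_closed V E r C \<longrightarrow> C = V)"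

lemma mono_boot: "mono (boot V E r A)"
  unfolding mono_iff_le_Suc by auto

lemma boot_subset: "A \<subseteq> V \<Longrightarrow> boot V E r A i \<subseteq> V"
  by (induction i) auto

lemma finite_subset_UN_mono:
  fixes B :: "nat \<Rightarrow> 'a set"
  assumes "mono B" "finite F" "F \<subseteq> (\<Union>i. B i)"
  shows "\<exists>i. F \<subseteq> B i"
  using assms(2,3)
proof (induction F rule: finite_induct)
  case (insert x F)
  then obtain i j where "F \<subseteq> B i" "x \<in> B j" by auto
  then have "insert x F \<subseteq> B (max i j)"
    using monoD[OF assms(1), of i "max i j"] monoD[OF assms(1), of j "max i j"] by auto
  then show ?case ..
qed simp

lemma boot_closed_UN_boot:
  assumes "finite V" "A \<subseteq> V"
  shows "boot_closed V E r (\<Union>i. boot V E r A i)"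
  unfolding boot_closed_def
proof (intro ballI impI)
  fix v assume v: "v \<in> V" and r: "r \<le> card (nbrs V E v \<inter> (\<Union>i. boot V E r A i))"
  have "finite (nbrs V E v \<inter> (\<Union>i. boot V E r A i))" using assms(1) by (simp add: nbrs_def)
  then obtain i where i: "nbrs V E v \<inter> (\<Union>i. boot V E r A i) \<subseteq> boot V E r A i"
    using finite_subset_UN_mono[OF mono_boot] by blast
  then have "nbrs V E v \<inter> (\<Union>i. boot V E r A i) = nbrs V E v \<inter> boot V E r A i" by auto
  then have "v \<in> boot V E r A (Suc i)" using v r by auto
  then show "v \<in> (\<Union>i. boot V E r A i)" by blast
qed

lemma spans_0: "spans V E 0 A"
  unfolding spans_def boot_closed_def by auto

lemma percolating_if_spans:
  assumes "finite V" "A \<subseteq> V" "spans V E r A"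
  shows "percolating V E r A"
proof -
  have "boot V E r A 0 \<subseteq> (\<Union>i. boot V E r A i)" by blast
  then have "A \<subseteq> (\<Union>i. boot V E r A i)" by simp
  moreover have "(\<Union>i. boot V E r A i) \<subseteq> V" using boot_subset[OF assms(2)] by blast
  ultimately have "(\<Union>i. boot V E r A i) = V"
    using assms(3) boot_closed_UN_boot[OF assms(1,2)] unfolding spans_def by simp
  then show ?thesis using assms(2) unfolding percolating_def by blast
qed

section \<open>The line graph of a clique\<close>

definition clique_edges :: "'a set \<Rightarrow> 'a set set" where
  "clique_edges W = {{u, v} | u v. u \<in> W \<and> v \<in> W \<and> u \<noteq> v}"

definition edge_nbrs :: "'a set set \<Rightarrow> 'a \<Rightarrow> 'a \<Rightarrow> 'a set set" where
  "edge_nbrs C u v = {f \<in> C. f \<noteq> {u, v} \<and> f \<inter> {u, v} \<noteq> {}}"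

definition deg :: "'a set set \<Rightarrow> 'a \<Rightarrow> nat" where
  "deg H x = card {w. {x, w} \<in> H}"

lemma doubleton_in_clique_edges [simp]:
  "{u, v} \<in> clique_edges W \<longleftrightarrow> u \<in> W \<and> v \<in> W \<and> u \<noteq> v"
  unfolding clique_edges_def by (auto simp: doubleton_eq_iff)

lemma clique_edgesE:
  assumes "f \<in> clique_edges W"
  obtains u v where "f = {u, v}" "u \<in> W" "v \<in> W" "u \<noteq> v"
  using assms unfolding clique_edges_def by blast

lemma finite_clique_edges: "finite W \<Longrightarrow> finite (clique_edges W)"
  by (rule finite_subset[of _ "Pow W"]) (auto simp: clique_edges_def)

lemma clique_edges_mono: "W \<subseteq> W' \<Longrightarrow> clique_edges W \<subseteq> clique_edges W'"
  by (auto elim!: clique_edgesE)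

lemma line_V_K: "line_V (K_V n) K_E = clique_edges {0..<n}"
  unfolding line_V_def clique_edges_def K_V_def K_E_def by auto

lemma nbrs_clique_edges:
  assumes "C \<subseteq> clique_edges W"
  shows "nbrs (clique_edges W) line_E {u, v} \<inter> C = edge_nbrs C u v"
  using assms unfolding nbrs_def edge_nbrs_def line_E_def by auto

lemma card_le_deg:
  assumes "finite W" "H \<subseteq> clique_edges W" "Z \<subseteq> {w. {x, w} \<in> H}"
  shows "card Z \<le> deg H x"
proof -
  have "{w. {x, w} \<in> H} \<subseteq> W" using assms(2) by auto
  then show ?thesis
    unfolding deg_def using assms(1,3) by (intro card_mono) (auto intro: finite_subset)
qed

lemma closed_clique_edgeI:
  assumes "boot_closed (clique_edges W) line_E r C" "C \<subseteq> clique_edges W"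
    and "u \<in> W" "v \<in> W" "u \<noteq> v" "r \<le> card (edge_nbrs C u v)"
  shows "{u, v} \<in> C"
  using assms nbrs_clique_edges[OF assms(2)] unfolding boot_closed_def by auto

lemma card_edge_nbrs_ge:
  assumes "finite C" "u \<noteq> v"
    and X: "X \<subseteq> {w. {u, w} \<in> C \<and> w \<noteq> v}" and Y: "Y \<subseteq> {w. {v, w} \<in> C \<and> w \<noteq> u}"
  shows "card X + card Y \<le> card (edge_nbrs C u v)"
proof -
  have "finite ((\<lambda>w. {u, w}) ` X)" "finite ((\<lambda>w. {v, w}) ` Y)"
    using X Y by (auto intro: finite_subset[OF _ assms(1)])
  then have "finite X" "finite Y"
    by (auto dest: finite_imageD simp: inj_on_def doubleton_eq_iff)
  moreover have "inj_on (\<lambda>w. {u, w}) X" "inj_on (\<lambda>w. {v, w}) Y"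
    by (auto simp: inj_on_def doubleton_eq_iff)
  moreover have "(\<lambda>w. {u, w}) ` X \<inter> (\<lambda>w. {v, w}) ` Y = {}"
    using X Y assms(2) by (auto simp: doubleton_eq_iff)
  ultimately have "card X + card Y = card ((\<lambda>w. {u, w}) ` X \<union> (\<lambda>w. {v, w}) ` Y)"
    by (simp add: card_Un_disjoint card_image)
  also have "\<dots> \<le> card (edge_nbrs C u v)"
    using X Y assms(1,2) by (intro card_mono) (auto simp: edge_nbrs_def doubleton_eq_iff)
  finally show ?thesis .
qed

lemma closed_clique_edgeI_count:
  assumes "finite W" "boot_closed (clique_edges W) line_E r C" "C \<subseteq> clique_edges W"
    and "u \<in> W" "v \<in> W" "u \<noteq> v"
    and "X \<subseteq> {w. {u, w} \<in> C \<and> w \<noteq> v}" "Y \<subseteq> {w. {v, w} \<in> C \<and> w \<noteq> u}"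
    and "r \<le> card X + card Y"
  shows "{u, v} \<in> C"
proof -
  have "finite C" using assms(1,3) finite_clique_edges finite_subset by blast
  then show ?thesis
    using assms card_edge_nbrs_ge[of C u v X Y]
    by (intro closed_clique_edgeI[OF assms(2,3)]) auto
qed

lemma boot_closed_remove_hubs:
  assumes "finite W" "C \<subseteq> clique_edges W" "boot_closed (clique_edges W) line_E r C" "x \<noteq> y"
    and hub_x: "\<forall>w\<in>W. w \<noteq> x \<longrightarrow> {x, w} \<in> C" and hub_y: "\<forall>w\<in>W. w \<noteq> y \<longrightarrow> {y, w} \<in> C"
  shows "boot_closed (clique_edges (W - {x, y})) line_E (r - 4) (C \<inter> clique_edges (W - {x, y}))"
  unfolding boot_closed_def
proof (intro ballI impI)
  fix e assume "e \<in> clique_edges (W - {x, y})"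
  then obtain u v where e: "e = {u, v}" "u \<in> W - {x, y}" "v \<in> W - {x, y}" "u \<noteq> v"
    by (rule clique_edgesE)
  define C' where "C' = C \<inter> clique_edges (W - {x, y})"
  define F where "F = {{u, x}, {u, y}, {v, x}, {v, y}}"
  assume "r - 4 \<le> card (nbrs (clique_edges (W - {x, y})) line_E e \<inter> C')"
  then have r: "r - 4 \<le> card (edge_nbrs C' u v)"
    unfolding e(1) C'_def by (subst (asm) nbrs_clique_edges) auto
  have fin: "finite (edge_nbrs C u v)"
    using assms(1,2) finite_clique_edges finite_subset unfolding edge_nbrs_def by fastforce
  \<comment> \<open>the four edges joining u, v to the hubs are infected neighbours of uv lost in the restriction\<close>
  have F_nbrs: "F \<subseteq> edge_nbrs C u v"
    using e hub_x hub_y unfolding F_def edge_nbrs_def by (auto simp: insert_commute)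
  have C'_nbrs: "edge_nbrs C' u v \<subseteq> edge_nbrs C u v"
    unfolding C'_def edge_nbrs_def by auto
  have "card F = 4" using e assms(4) unfolding F_def by (auto simp: doubleton_eq_iff)
  moreover have "F \<inter> edge_nbrs C' u v = {}"
    unfolding F_def C'_def edge_nbrs_def using e by auto
  ultimately have "card (edge_nbrs C' u v) + 4 = card (F \<union> edge_nbrs C' u v)"
    using fin F_nbrs C'_nbrs by (simp add: card_Un_disjoint finite_subset)
  also have "\<dots> \<le> card (edge_nbrs C u v)"
    using fin F_nbrs C'_nbrs by (intro card_mono) auto
  finally have "r \<le> card (edge_nbrs C u v)" using r by linarith
  then have "{u, v} \<in> C"
    using e assms(2,3) by (intro closed_clique_edgeI) auto
  then show "e \<in> C'" unfolding C'_def using e by auto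
qed

lemma clique_edges_eq_if_hubs_full:
  assumes "C \<subseteq> clique_edges W" "clique_edges (W - {x, y}) \<subseteq> C"
    and "\<forall>w\<in>W. w \<noteq> x \<longrightarrow> {x, w} \<in> C" "\<forall>w\<in>W. w \<noteq> y \<longrightarrow> {y, w} \<in> C"
  shows "C = clique_edges W"
proof
  show "clique_edges W \<subseteq> C"
  proof
    fix e assume "e \<in> clique_edges W"
    then obtain u v where e: "e = {u, v}" "u \<in> W" "v \<in> W" "u \<noteq> v" by (rule clique_edgesE)
    then show "e \<in> C"
      using assms(2-4) by (cases "u \<in> {x, y} \<or> v \<in> {x, y}") (auto simp: insert_commute)
  qed
qed (fact assms(1))

lemma closed_eq_clique_edges_if_hubs_full:
  assumes "finite W" "C \<subseteq> clique_edges W" "boot_closed (clique_edges W) line_E r C" "x \<noteq> y"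
    and "\<forall>w\<in>W. w \<noteq> x \<longrightarrow> {x, w} \<in> C" "\<forall>w\<in>W. w \<noteq> y \<longrightarrow> {y, w} \<in> C"
    and "spans (clique_edges (W - {x, y})) line_E (r - 4) H'"
    and "H' \<subseteq> C" "H' \<subseteq> clique_edges (W - {x, y})"
  shows "C = clique_edges W"
proof -
  have "C \<inter> clique_edges (W - {x, y}) = clique_edges (W - {x, y})"
    using assms(7-9) boot_closed_remove_hubs[OF assms(1-6)] unfolding spans_def by simp
  then show ?thesis using clique_edges_eq_if_hubs_full[OF assms(2) _ assms(5,6)] by blast
qed

section \<open>Offsets of the hub stars\<close>

definition parity_interval :: "bool \<Rightarrow> nat \<Rightarrow> nat set" where
  "parity_interval p k = {i. 2 \<le> i \<and> i < k \<and> even i = p}"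

definition fold_back :: "nat \<Rightarrow> nat \<Rightarrow> nat" where
  "fold_back L j = (if j < L then j else 2 * L - 1 - j)"

definition hub_offsets :: "nat \<Rightarrow> nat \<Rightarrow> bool \<Rightarrow> nat set" where
  "hub_offsets r L p = fold_back L ` parity_interval p (Suc r)"

lemma finite_parity_interval [simp]: "finite (parity_interval p k)"
  unfolding parity_interval_def by simp

lemma card_parity_interval: "card (parity_interval p k) = (k - (if p then 1 else 2)) div 2"
proof (induction k)
  case (Suc k)
  have "parity_interval p (Suc k) =
      (if 2 \<le> k \<and> even k = p then insert k (parity_interval p k) else parity_interval p k)"
    by (auto simp: parity_interval_def less_Suc_eq)
  moreover have "k \<notin> parity_interval p k" by (simp add: parity_interval_def)
  ultimately have "card (parity_interval p (Suc k)) = (if 2 \<le> k \<and> even k = p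
      then Suc (card (parity_interval p k)) else card (parity_interval p k))"
    by simp
  also have "\<dots> = (if 2 \<le> k \<and> even k = p then Suc ((k - (if p then 1 else 2)) div 2)
      else (k - (if p then 1 else 2)) div 2)"
    by (simp only: Suc.IH)
  also have "\<dots> = (Suc k - (if p then 1 else 2)) div 2"
    by (cases p; cases "even k"; simp; presburger)
  finally show ?case .
qed (simp add: parity_interval_def)

lemma hub_offsets_bounds:
  assumes "r + 4 \<le> 2 * L" "i \<in> hub_offsets r L p"
  shows "2 \<le> i" "i < L"
  using assms unfolding hub_offsets_def parity_interval_def fold_back_def by auto

lemma card_hub_offsets:
  assumes "r + 4 \<le> 2 * L"
  shows "card (hub_offsets r L p) = (Suc r - (if p then 1 else 2)) div 2"
proof -
  have "inj_on (fold_back L) (parity_interval p (Suc r))"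
    using assms by (auto simp: inj_on_def fold_back_def parity_interval_def split: if_splits)
  then show ?thesis by (simp add: hub_offsets_def card_image card_parity_interval)
qed

lemma hub_offsetsI:
  "j < L \<Longrightarrow> 2 \<le> j \<Longrightarrow> j \<le> r \<Longrightarrow> even j = p \<Longrightarrow> j \<in> hub_offsets r L p"
  unfolding hub_offsets_def parity_interval_def
  by (rule image_eqI[of _ _ j]) (auto simp: fold_back_def)

lemma two_notin_odd_hub_offsets: "r + 4 \<le> 2 * L \<Longrightarrow> 2 \<notin> hub_offsets r L False"
  unfolding hub_offsets_def parity_interval_def fold_back_def by auto

text \<open>An offset i of the wrong parity enters hub_offsets only as the image 2L - 1 - j' of some
  j' \<ge> L; then every larger offset j < L of the same parity is the image of 2L - 1 - j \<le> j'.\<close>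
lemma hub_offsets_upward:
  assumes "r + 4 \<le> 2 * L" "j < L" "i < j" "even i = even j" "even j \<noteq> p"
    and "i \<in> hub_offsets r L p"
  shows "j \<in> hub_offsets r L p"
proof -
  obtain j' where j': "j' \<in> parity_interval p (Suc r)" "i = fold_back L j'"
    using assms(6) unfolding hub_offsets_def by auto
  then have "L \<le> j'" "i = 2 * L - 1 - j'"
    using assms(4,5) unfolding parity_interval_def fold_back_def by (auto split: if_splits)
  then have "2 * L - 1 - j \<in> parity_interval p (Suc r)"
    using j'(1) assms(1-5) unfolding parity_interval_def by auto
  moreover have "\<not> 2 * L - 1 - j < L" using assms(2) by linarith
  then have "fold_back L (2 * L - 1 - j) = j"
    using assms(2) unfolding fold_back_def by simp
  ultimately show ?thesis unfolding hub_offsets_def by (metis image_eqI)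
qed

lemma card_hub_offsets_Un_parity_interval:
  assumes "r + 4 \<le> 2 * L" "j < L" "even j \<noteq> p" "j \<notin> hub_offsets r L p"
  shows "card (hub_offsets r L p \<union> parity_interval (\<not> p) j)
    = (Suc r - (if p then 1 else 2)) div 2 + card (parity_interval (\<not> p) j)"
proof -
  have "hub_offsets r L p \<inter> parity_interval (\<not> p) j = {}"
    using hub_offsets_upward[OF assms(1,2) _ _ assms(3)] assms(3,4)
    unfolding parity_interval_def by auto
  moreover have "finite (hub_offsets r L p)" by (simp add: hub_offsets_def)
  ultimately show ?thesis by (simp add: card_Un_disjoint card_hub_offsets[OF assms(1)])
qed

section \<open>One step of the construction\<close>

text \<open>Lower bound on the degree of vertex a + j maintained by the construction; at the next level
  it provides the H'-neighbours needed to infect the hub edges reaching that vertex.\<close>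
definition deg_bound :: "nat \<Rightarrow> nat \<Rightarrow> nat" where
  "deg_bound r j = (if j = 0 then (r + 1) div 2 else (r + 2 - j) div 2)"

lemma deg_bound_0 [simp]: "deg_bound 0 j = 0"
  unfolding deg_bound_def by simp

lemma deg_bound_shift: "3 \<le> j \<Longrightarrow> j \<le> r \<Longrightarrow> deg_bound (r - 4) (j - 2) = (r - j) div 2"
  unfolding deg_bound_def by simp

lemma deg_bound_step:
  assumes "2 \<le> j" "j \<le> r \<and> even j \<longrightarrow> b0" "j \<le> r \<and> odd j \<longrightarrow> b1" "even r \<and> j = 2 \<longrightarrow> b1"
  shows "deg_bound r j \<le> deg_bound (r - 4) (j - 2) + of_bool b0 + of_bool b1"
proof -
  consider "r < j" | "j = 2" "2 \<le> r" | "3 \<le> j" "j \<le> r" using assms(1) by linarith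
  then show ?thesis
  proof cases
    case 1
    then show ?thesis by (simp add: deg_bound_def)
  next
    case 2
    have "r div 2 \<le> (r - 3) div 2 + 1 + of_bool (even r)"
      by (cases "even r"; simp; presburger)
    then show ?thesis
      using 2 assms(2,4) by (cases "even r") (auto simp: deg_bound_def)
  next
    case 3
    have "(r + 2 - j) div 2 \<le> (r - j) div 2 + 1" using 3 by presburger
    moreover have "b0 \<or> b1" using 3 assms(2,3) by blast
    ultimately show ?thesis using 3 by (auto simp: deg_bound_def deg_bound_shift)
  qed
qed

lemma hub0_count_ge:
  fixes j r :: nat
  assumes "odd j" "3 \<le> j" "j \<le> r"
  shows "r \<le> 2 + r div 2 + (j - 2) div 2 + deg_bound (r - 4) (j - 2)"
proof -
  obtain t where "j = 2 * t + 1" using assms(1) oddE by blast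
  then show ?thesis
    using assms(3) deg_bound_shift[OF assms(2,3)] by (cases "even r") (auto elim!: evenE oddE)
qed

lemma hub1_count_ge:
  fixes j r :: nat
  assumes "even j" "2 \<le> j" "j \<le> r" "even r \<longrightarrow> j \<noteq> 2"
  shows "r \<le> 2 + (r - 1) div 2 + (j - 1) div 2 + deg_bound (r - 4) (j - 2)"
proof -
  obtain t where "j = 2 * t" using assms(1) by blast
  then show ?thesis
    using assms(2-4) by (cases "even r") (auto elim!: evenE oddE simp: deg_bound_def)
qed

locale hub_extension =
  fixes r a L :: nat and H' :: "nat set set"
  assumes r_pos: "1 \<le> r" and L_large: "r + 4 \<le> 2 * L"
    and H'_edges: "H' \<subseteq> clique_edges {a + 2..<a + L}"
    and H'_deg: "\<And>j. 2 \<le> j \<Longrightarrow> j < L \<Longrightarrow> deg_bound (r - 4) (j - 2) \<le> deg H' (a + j)"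
begin

definition star0 :: "nat set" where
  "star0 = hub_offsets r L True"

definition star1 :: "nat set" where
  "star1 = hub_offsets r L False \<union> (if even r then {2} else {})"

definition ext_set :: "nat set set" where
  "ext_set = H' \<union> (if odd r then {{a, Suc a}} else {})
    \<union> (\<lambda>j. {a, a + j}) ` star0 \<union> (\<lambda>j. {Suc a, a + j}) ` star1"

lemma L_ge_3: "3 \<le> L"
  using r_pos L_large by linarith

lemma star0_bounds: "j \<in> star0 \<Longrightarrow> 2 \<le> j \<and> j < L"
  unfolding star0_def using hub_offsets_bounds[OF L_large] by blast

lemma star1_bounds: "j \<in> star1 \<Longrightarrow> 2 \<le> j \<and> j < L"
  unfolding star1_def using hub_offsets_bounds[OF L_large] L_ge_3 by (auto split: if_splits)

lemma finite_star0: "finite star0" and finite_star1: "finite star1"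
  by (simp_all add: star0_def star1_def hub_offsets_def)

lemma card_star0: "card star0 = r div 2"
  unfolding star0_def card_hub_offsets[OF L_large] by simp

lemma card_star1: "card star1 = r div 2"
proof -
  have "card (hub_offsets r L False) = (r - 1) div 2" using card_hub_offsets[OF L_large] by simp
  then show ?thesis
    using two_notin_odd_hub_offsets[OF L_large] r_pos unfolding star1_def
    by (simp add: hub_offsets_def) presburger
qed

lemma ext_set_edges: "ext_set \<subseteq> clique_edges {a..<a + L}"
proof -
  have "clique_edges {a + 2..<a + L} \<subseteq> clique_edges {a..<a + L}"
    by (rule clique_edges_mono) auto
  moreover have "(\<lambda>j. {a, a + j}) ` star0 \<subseteq> clique_edges {a..<a + L}"
    by (auto dest: star0_bounds)
  moreover have "(\<lambda>j. {Suc a, a + j}) ` star1 \<subseteq> clique_edges {a..<a + L}"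
    by (auto dest: star1_bounds)
  ultimately show ?thesis
    using H'_edges L_ge_3 unfolding ext_set_def by auto
qed

lemma card_ext_set: "card ext_set \<le> card H' + r"
proof -
  have "card ext_set \<le> card H' + card (if odd r then {{a, Suc a}} else {})
      + card ((\<lambda>j. {a, a + j}) ` star0) + card ((\<lambda>j. {Suc a, a + j}) ` star1)"
    unfolding ext_set_def by (intro order.trans[OF card_Un_le] add_mono card_Un_le order.refl)
  also have "\<dots> \<le> card H' + of_bool (odd r) + r div 2 + r div 2"
    using card_image_le[OF finite_star0] card_image_le[OF finite_star1] card_star0 card_star1
    by (intro add_mono) auto
  also have "\<dots> = card H' + r" by simp presburger
  finally show ?thesis .
qed

lemma deg_ext_set_hub:
  assumes "x \<in> {a, Suc a}" "y \<in> {a, Suc a}" "x \<noteq> y" "S \<subseteq> {2..<L}" "card S = r div 2"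
    and "(+) a ` S \<union> (if odd r then {y} else {}) \<subseteq> {w. {x, w} \<in> ext_set}"
  shows "deg_bound r (x - a) \<le> deg ext_set x"
proof -
  have "card ((+) a ` S \<union> (if odd r then {y} else {})) \<le> deg ext_set x"
    by (rule card_le_deg[OF _ ext_set_edges assms(6)]) simp
  moreover have "y \<notin> (+) a ` S" using assms(2,4) by auto
  then have "card ((+) a ` S \<union> (if odd r then {y} else {})) = r div 2 + of_bool (odd r)"
    using assms(4,5) finite_subset[OF assms(4)] by (simp add: card_image)
  moreover have "deg_bound r (x - a) = r div 2 + of_bool (odd r)"
    using assms(1) unfolding deg_bound_def by (cases "odd r"; auto; presburger)
  ultimately show ?thesis by simp
qed

lemma deg_ext_set_outer:
  assumes "2 \<le> j" "j < L"
  shows "deg_bound r j \<le> deg ext_set (a + j)"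
proof -
  define N where "N = {w. {a + j, w} \<in> H'}"
  define M where "M = N \<union> (if j \<in> star0 then {a} else {}) \<union> (if j \<in> star1 then {Suc a} else {})"
  have "M \<subseteq> {w. {a + j, w} \<in> ext_set}"
    unfolding M_def N_def ext_set_def by (auto simp: insert_commute)
  then have "card M \<le> deg ext_set (a + j)"
    by (rule card_le_deg[OF _ ext_set_edges, rotated]) simp
  moreover have "N \<subseteq> {a + 2..<a + L}" using H'_edges unfolding N_def by auto
  then have "finite N" "a \<notin> N" "Suc a \<notin> N" by (auto intro: finite_subset)
  then have "card M = deg H' (a + j) + of_bool (j \<in> star0) + of_bool (j \<in> star1)"
    unfolding M_def N_def deg_def by (cases "j \<in> star0"; cases "j \<in> star1"; simp)
  moreover have "j \<le> r \<and> even j \<longrightarrow> j \<in> star0"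
    using hub_offsetsI[OF assms(2,1), of r True] unfolding star0_def by simp
  moreover have "j \<le> r \<and> odd j \<longrightarrow> j \<in> star1"
    using hub_offsetsI[OF assms(2,1), of r False] unfolding star1_def by simp
  moreover have "even r \<and> j = 2 \<longrightarrow> j \<in> star1" unfolding star1_def by simp
  ultimately show ?thesis
    using deg_bound_step[OF assms(1), of r "j \<in> star0" "j \<in> star1"] H'_deg[OF assms] by linarith
qed

lemma deg_ext_set: "j < L \<Longrightarrow> deg_bound r j \<le> deg ext_set (a + j)"
proof -
  assume "j < L"
  have "(+) a ` star0 \<union> (if odd r then {Suc a} else {}) \<subseteq> {w. {a, w} \<in> ext_set}"
    "(+) a ` star1 \<union> (if odd r then {a} else {}) \<subseteq> {w. {Suc a, w} \<in> ext_set}"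
    unfolding ext_set_def by (auto simp: insert_commute)
  moreover have "star0 \<subseteq> {2..<L}" "star1 \<subseteq> {2..<L}"
    using star0_bounds star1_bounds by auto
  ultimately have hubs: "deg_bound r 0 \<le> deg ext_set a" "deg_bound r 1 \<le> deg ext_set (Suc a)"
    using deg_ext_set_hub[of a "Suc a" star0] deg_ext_set_hub[of "Suc a" a star1] card_star0 card_star1
    by auto
  consider "j = 0" | "j = 1" | "2 \<le> j" by linarith
  then show ?thesis
    using hubs deg_ext_set_outer[OF _ \<open>j < L\<close>] by cases auto
qed

context
  fixes C :: "nat set set"
  assumes C_edges: "C \<subseteq> clique_edges {a..<a + L}"
    and C_closed: "boot_closed (clique_edges {a..<a + L}) line_E r C"
    and ext_set_C: "ext_set \<subseteq> C"
begin

lemma star0_edge_in_C: "i \<in> star0 \<Longrightarrow> {a, a + i} \<in> C"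
  and star1_edge_in_C: "i \<in> star1 \<Longrightarrow> {Suc a, a + i} \<in> C"
  and hub_hub_edge_in_C: "odd r \<Longrightarrow> {a, Suc a} \<in> C"
  and H'_in_C: "H' \<subseteq> C"
  using ext_set_C unfolding ext_set_def by auto

lemma edge_in_C:
  assumes "u \<in> {a..<a + L}" "v \<in> {a..<a + L}" "u \<noteq> v"
    and "X \<subseteq> {w. {u, w} \<in> C \<and> w \<noteq> v}" "Y \<subseteq> {w. {v, w} \<in> C \<and> w \<noteq> u}"
    and "r \<le> card X + card Y"
  shows "{u, v} \<in> C"
  by (rule closed_clique_edgeI_count[OF _ C_closed C_edges assms]) simp

lemma hub_edge_in_C:
  assumes hubs: "x \<in> {a, Suc a}" "y \<in> {a, Suc a}" "x \<noteq> y"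
    and j: "2 \<le> j" "j < L"
    and "{x, y} \<in> C" "{y, a + j} \<in> C"
    and I: "I \<subseteq> {2..<L} - {j}" "\<forall>i\<in>I. {x, a + i} \<in> C"
    and "r \<le> 2 + card I + deg H' (a + j)"
  shows "{x, a + j} \<in> C"
proof -
  define N where "N = {w. {a + j, w} \<in> H'}"
  have N: "N \<subseteq> {a + 2..<a + L}" using H'_edges unfolding N_def by auto
  have "y \<notin> (+) a ` I" using I(1) hubs(2) by auto
  then have "card (insert y ((+) a ` I)) = Suc (card I)"
    using finite_subset[OF I(1)] by (simp add: card_image)
  moreover have "y \<notin> N" using N hubs(2) by auto
  then have "card (insert y N) = Suc (deg H' (a + j))"
    using finite_subset[OF N] unfolding N_def deg_def by simp
  moreover have "insert y ((+) a ` I) \<subseteq> {w. {x, w} \<in> C \<and> w \<noteq> a + j}"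
    using assms(6) I j hubs(2) by auto
  moreover have "insert y N \<subseteq> {w. {a + j, w} \<in> C \<and> w \<noteq> x}"
    using assms(7) N hubs H'_in_C unfolding N_def by (auto simp: insert_commute)
  ultimately show ?thesis
    using hubs j assms(10) edge_in_C[of x "a + j" "insert y ((+) a ` I)" "insert y N"] by auto
qed

lemma hub_edge_far:
  assumes "x \<in> {a, Suc a}" "r < j" "2 \<le> j" "j < L"
    and "\<forall>w\<in>{a..<a + j} - {x}. {x, w} \<in> C"
  shows "{x, a + j} \<in> C"
proof -
  have "{a..<a + j} - {x} \<subseteq> {w. {x, w} \<in> C \<and> w \<noteq> a + j}" using assms(5) by auto
  moreover have "r \<le> card ({a..<a + j} - {x}) + card ({} :: nat set)" using assms(1-3) by auto
  ultimately show ?thesis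
    using assms(1,3,4) edge_in_C[of x "a + j" "{a..<a + j} - {x}" "{}"] by auto
qed

lemma hub0_edge_odd:
  assumes "odd j" "3 \<le> j" "j \<le> r" "j < L" "j \<notin> star0"
    and "{a, Suc a} \<in> C" "\<forall>i. 2 \<le> i \<and> i < j \<longrightarrow> {a, a + i} \<in> C"
  shows "{a, a + j} \<in> C"
proof -
  define I where "I = star0 \<union> parity_interval False j"
  have "j \<in> star1"
    using hub_offsetsI[OF assms(4) _ assms(3), of False] assms(1,2) unfolding star1_def by simp
  then have "{Suc a, a + j} \<in> C" by (rule star1_edge_in_C)
  moreover have "I \<subseteq> {2..<L} - {j}"
    using star0_bounds assms(4,5) unfolding I_def parity_interval_def by auto
  moreover have "\<forall>i\<in>I. {a, a + i} \<in> C"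
    using star0_edge_in_C assms(7) unfolding I_def parity_interval_def by auto
  moreover have "card I = r div 2 + (j - 2) div 2"
    using card_hub_offsets_Un_parity_interval[OF L_large assms(4), of True] assms(1,5)
    unfolding I_def star0_def by (simp add: card_parity_interval)
  ultimately show ?thesis
    using hub_edge_in_C[of a "Suc a" j I] hub0_count_ge[OF assms(1-3)] assms(2,4,6)
      H'_deg[of j] by simp
qed

lemma hub0_edges: "1 \<le> j \<Longrightarrow> j < L \<Longrightarrow> {a, a + j} \<in> C"
proof (induction j rule: less_induct)
  case (less j)
  have IH: "\<forall>w\<in>{a..<a + j} - {a}. {a, w} \<in> C"
  proof
    fix w assume w: "w \<in> {a..<a + j} - {a}"
    then have "{a, a + (w - a)} \<in> C" using less by (intro less.IH) auto
    then show "{a, w} \<in> C" using w by simp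
  qed
  consider "j \<in> star0" | "j = 1" | "r < j" "2 \<le> j" | "2 \<le> j" "j \<le> r" "j \<notin> star0"
    using less.prems by linarith
  then show ?case
  proof cases
    case 2
    show ?thesis
    proof (cases "odd r")
      case False
      have "(+) a ` star0 \<subseteq> {w. {a, w} \<in> C \<and> w \<noteq> Suc a}"
        "(+) a ` star1 \<subseteq> {w. {Suc a, w} \<in> C \<and> w \<noteq> a}"
        using star0_edge_in_C star0_bounds star1_edge_in_C star1_bounds by fastforce+
      moreover have "r \<le> card ((+) a ` star0) + card ((+) a ` star1)"
        using False card_star0 card_star1 by (simp add: card_image) presburger
      ultimately show ?thesis
        using 2 L_ge_3 edge_in_C[of a "Suc a" "(+) a ` star0" "(+) a ` star1"] by auto
    qed (use 2 hub_hub_edge_in_C in simp)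
  next
    case 4
    then have "odd j"
      using hub_offsetsI[OF less.prems(2) 4(1,2), of True] unfolding star0_def by auto
    then have "3 \<le> j" using 4(1) by presburger
    moreover have "{a, Suc a} \<in> C" using IH \<open>3 \<le> j\<close> by auto
    ultimately show ?thesis
      using hub0_edge_odd[OF \<open>odd j\<close> _ 4(2) less.prems(2) 4(3)] IH by auto
  qed (use star0_edge_in_C hub_edge_far[of a j] IH less.prems in auto)
qed

lemma hub1_edge_even:
  assumes "even j" "2 \<le> j" "j \<le> r" "j < L" "j \<notin> star1"
    and "\<forall>i. 2 \<le> i \<and> i < j \<longrightarrow> {Suc a, a + i} \<in> C"
  shows "{Suc a, a + j} \<in> C"
proof -
  define I where "I = hub_offsets r L False \<union> parity_interval True j"
  have "j \<notin> hub_offsets r L False" "even r \<longrightarrow> j \<noteq> 2"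
    using assms(5) unfolding star1_def by auto
  have "{Suc a, a} \<in> C" "{a, a + j} \<in> C"
    using hub0_edges[of 1] hub0_edges[of j] L_ge_3 assms(2,4) by (simp_all add: insert_commute)
  moreover have "I \<subseteq> {2..<L} - {j}"
    using hub_offsets_bounds[OF L_large] \<open>j \<notin> hub_offsets r L False\<close> assms(4)
    unfolding I_def parity_interval_def by auto
  moreover have "\<forall>i\<in>I. {Suc a, a + i} \<in> C"
    using star1_edge_in_C assms(6) unfolding I_def star1_def parity_interval_def by auto
  moreover have "card I = (r - 1) div 2 + (j - 1) div 2"
    using card_hub_offsets_Un_parity_interval[OF L_large assms(4), of False] assms(1)
      \<open>j \<notin> hub_offsets r L False\<close>
    unfolding I_def by (simp add: card_parity_interval)
  ultimately show ?thesis
    using hub_edge_in_C[of "Suc a" a j I] hub1_count_ge[OF assms(1-3) \<open>even r \<longrightarrow> j \<noteq> 2\<close>]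
      assms(2,4) H'_deg[of j] by (simp add: insert_commute)
qed

lemma hub1_edges: "2 \<le> j \<Longrightarrow> j < L \<Longrightarrow> {Suc a, a + j} \<in> C"
proof (induction j rule: less_induct)
  case (less j)
  have IH: "\<forall>w\<in>{a..<a + j} - {Suc a}. {Suc a, w} \<in> C"
  proof
    fix w assume w: "w \<in> {a..<a + j} - {Suc a}"
    show "{Suc a, w} \<in> C"
    proof (cases "w = a")
      case True
      then show ?thesis using hub0_edges[of 1] L_ge_3 by (simp add: insert_commute)
    next
      case False
      then have "{Suc a, a + (w - a)} \<in> C" using w less by (intro less.IH) auto
      then show ?thesis using w by simp
    qed
  qed
  consider "j \<in> star1" | "r < j" | "j \<le> r" "j \<notin> star1" by linarith
  then show ?case
  proof cases
    case 3
    then have "even j"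
      using hub_offsetsI[OF less.prems(2,1) 3(1), of False] unfolding star1_def by auto
    then show ?thesis
      using hub1_edge_even 3 less IH by auto
  qed (use star1_edge_in_C hub_edge_far[of "Suc a" j] IH less.prems in auto)
qed

lemma hub0_saturated: "\<forall>w\<in>{a..<a + L}. w \<noteq> a \<longrightarrow> {a, w} \<in> C"
proof (intro ballI impI)
  fix w assume w: "w \<in> {a..<a + L}" "w \<noteq> a"
  then have "1 \<le> w - a" "w - a < L" by auto
  then have "{a, a + (w - a)} \<in> C" by (rule hub0_edges)
  then show "{a, w} \<in> C" using w by simp
qed

lemma hub1_saturated: "\<forall>w\<in>{a..<a + L}. w \<noteq> Suc a \<longrightarrow> {Suc a, w} \<in> C"
proof (intro ballI impI)
  fix w assume w: "w \<in> {a..<a + L}" "w \<noteq> Suc a"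
  show "{Suc a, w} \<in> C"
  proof (cases "w = a")
    case True
    then show ?thesis using hub0_edges[of 1] L_ge_3 by (simp add: insert_commute)
  next
    case False
    then have "2 \<le> w - a" "w - a < L" using w by auto
    then have "{Suc a, a + (w - a)} \<in> C" by (rule hub1_edges)
    then show ?thesis using w by simp
  qed
qed

end

lemma spans_ext_set:
  assumes "spans (clique_edges {a + 2..<a + L}) line_E (r - 4) H'"
  shows "spans (clique_edges {a..<a + L}) line_E r ext_set"
  unfolding spans_def
proof (intro allI impI)
  fix C assume C: "ext_set \<subseteq> C" "C \<subseteq> clique_edges {a..<a + L}"
    "boot_closed (clique_edges {a..<a + L}) line_E r C"
  have "{a..<a + L} - {a, Suc a} = {a + 2..<a + L}" by auto
  then show "C = clique_edges {a..<a + L}"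
    using closed_eq_clique_edges_if_hubs_full[OF _ C(2,3) _
        hub0_saturated[OF C(2,3,1)] hub1_saturated[OF C(2,3,1)]] assms H'_edges H'_in_C[OF C(2,3,1)]
    by simp
qed

end

lemma square_bound_step:
  fixes r :: nat
  assumes "1 \<le> r"
  shows "(r - 4 + 2)^2 div 8 + r \<le> (r + 2)^2 div 8"
proof (cases "4 \<le> r")
  case True
  then obtain s where "r = s + 4" using le_Suc_ex by (metis add.commute)
  then have "(r + 2)^2 = (r - 4 + 2)^2 + 8 * r"
    by (simp add: power2_eq_square algebra_simps)
  then show ?thesis by simp
next
  case False
  with assms have "r = 1 \<or> r = 2 \<or> r = 3" by auto
  then show ?thesis by (elim disjE) (simp_all add: power2_eq_square)
qed

lemma spanning_set_exists:
  assumes "r = 0 \<or> r + 4 \<le> 2 * L"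
  shows "\<exists>H. H \<subseteq> clique_edges {a..<a + L} \<and> card H \<le> (r + 2)^2 div 8
    \<and> (\<forall>j<L. deg_bound r j \<le> deg H (a + j)) \<and> spans (clique_edges {a..<a + L}) line_E r H"
  using assms
proof (induction r arbitrary: a L rule: less_induct)
  case (less r)
  show ?case
  proof (cases "r = 0")
    case True
    then show ?thesis by (intro exI[of _ "{}"]) (simp add: spans_0)
  next
    case False
    then have L_large: "r + 4 \<le> 2 * L" using less.prems by simp
    then have IH_cond: "r - 4 = 0 \<or> r - 4 + 4 \<le> 2 * (L - 2)" by linarith
    have "r - 4 < r" using False by simp
    moreover have "a + 2 + (L - 2) = a + L" using L_large by linarith
    ultimately obtain H' where H': "H' \<subseteq> clique_edges {a + 2..<a + L}"
      "card H' \<le> (r - 4 + 2)^2 div 8" "\<forall>j<L - 2. deg_bound (r - 4) j \<le> deg H' (a + 2 + j)"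
      "spans (clique_edges {a + 2..<a + L}) line_E (r - 4) H'"
      using less.IH[OF _ IH_cond, where a = "a + 2"] by metis
    interpret hub_extension r a L H'
    proof
      fix j assume j: "2 \<le> j" "j < L"
      have "deg_bound (r - 4) (j - 2) \<le> deg H' (a + 2 + (j - 2))"
        by (rule H'(3)[rule_format]) (use j in linarith)
      moreover have "a + 2 + (j - 2) = a + j" using j(1) by simp
      ultimately show "deg_bound (r - 4) (j - 2) \<le> deg H' (a + j)" by (simp only:)
    qed (use False L_large H'(1) in auto)
    show ?thesis
    proof (intro exI conjI)
      show "card ext_set \<le> (r + 2)^2 div 8"
        using card_ext_set H'(2) square_bound_step[OF r_pos] by linarith
      show "spans (clique_edges {a..<a + L}) line_E r ext_set"
        using spans_ext_set H'(4) .
    qed (use ext_set_edges deg_ext_set in auto)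
  qed
qed

theorem lemma5p2:
  fixes n r :: nat
  assumes "(r + 1) div 2 + 2 \<le> n"
  shows "m_perc (line_V (K_V n) K_E) line_E r \<le> (r + 2)^2 div 8"
proof -
  have "r + 4 \<le> 2 * n" using assms by linarith
  then obtain H where H: "H \<subseteq> clique_edges {0..<n}" "card H \<le> (r + 2)^2 div 8"
    "spans (clique_edges {0..<n}) line_E r H"
    using spanning_set_exists[of r n 0] by auto
  then have "percolating (line_V (K_V n) K_E) line_E r H"
    unfolding line_V_K by (intro percolating_if_spans) (simp_all add: finite_clique_edges)
  then have "m_perc (line_V (K_V n) K_E) line_E r \<le> card H"
    unfolding m_perc_def by (intro Least_le) blast
  with H(2) show ?thesis by linarith
qed

end
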